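(* Let $n\ge 1$, $0\le t$, $l\ge 0$ with $t+l\le n$, and let $C_1\subseteq\mathbb F_2^n$ be a linear code of dimension $t$. Let $C_2(X)$ be a random linear code of dimension $t+l$ with $C_1\subseteq C_2(X)\subseteq\mathbb F_2^n$, whose distribution satisfies: for every $x\in\mathbb F_2^n\setminus C_1$, $$\Pr_X[x\in C_2(X)]=\frac{2^{l+t}-2^t}{2^n-2^t}.$$ Then for every additive channel $W$ on $\mathbb F_2^n$ with noise distribution $P_W$, $$\mathbb E_X\big[1-P_W(\Gamma_{C_2(X)}+C_1)\big]\le \sum_{k=0}^n \tilde P_W(k)\, g(2^{l+t-n}\mid n,k).$$
   Context: For $x\in\mathbb F_2^n$, $|x|$ is its Hamming weight and $T_n^k=\{x\in\mathbb F_2^n:|x|=k\}$. $h(p)=-p\log_2p-(1-p)\log_2(1-p)$ is the binary entropy. An additive channel $W$ on $\mathbb F_2^n$ is one with $W(y|x)=P_W(y-x)$ for a probability distribution $P_W$ on $\mathbb F_2^n$; set $\tilde P_W(k)=P_W(T_n^k)$. For a linear code $C_2\subseteq\mathbb F_2^n$, $\Gamma_{C_2}\subseteq\mathbb F_2^n$ denotes a set of coset representatives of $\mathbb F_2^n/C_2$ obtained by choosing in each coset $[x]_2=x+C_2$ an element of minimum Hamming weight, i.e. $\Gamma([x]_2)=x+\operatorname{argmin}_{x_2\in C_2}|x+x_2|$ (ties broken arbitrarily); $\Gamma_{C_2}+C_1=\{\gamma+c:\gamma\in\Gamma_{C_2},c\in C_1\}$. The quantity $1-P_W(\Gamma_{C_2}+C_1)$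 is the error probability of transmitting $C_2/C_1$ with minimum-distance coset decoding. Define $g(x\mid n,k)=\min\{2^{nh(k/n)}x,1\}$ if $k\le\lfloor n/2\rfloor$ and $g(x\mid n,k)=1$ if $k>\lfloor n/2\rfloor$. *)

theory Defs
  imports "HOL-Probability.Probability"
begin

text \<open>Vectors of F_2^n are modelled as subsets of a finite index type 'n with
  n = CARD('n): a vector is identified with its support.\<close>

definition vadd :: "'n set \<Rightarrow> 'n set \<Rightarrow> 'n set" where
  "vadd x y = (x - y) \<union> (y - x)"

definition hweight :: "'n::finite set \<Rightarrow> nat" where
  "hweight x = card x"

definition lin_code :: "'n set set \<Rightarrow> bool" where
  "lin_code C \<longleftrightarrow> {} \<in> C \<and> (\<forall>x\<in>C. \<forall>y\<in>C. vadd x y \<in> C)"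

definition lin_code_dim :: "'n::finite set set \<Rightarrow> nat \<Rightarrow> bool" where
  "lin_code_dim C d \<longleftrightarrow> lin_code C \<and> card C = 2 ^ d"

text \<open>Ties are broken arbitrarily (G is arbitrary subject to these constraints).\<close>
definition min_coset_rep :: "'n::finite set set \<Rightarrow> ('n set \<Rightarrow> 'n set) \<Rightarrow> bool" where
  "min_coset_rep C G \<longleftrightarrow>
     (\<forall>x. (\<exists>c\<in>C. G x = vadd x c) \<and> (\<forall>c\<in>C. hweight (G x) \<le> hweight (vadd x c))) \<and>
     (\<forall>x y. vadd x y \<in> C \<longrightarrow> G x = G y)"

text \<open>Gamma_C + C_1, where Gamma_C = range G is the set of coset representatives.\<close>
definition rep_plus :: "('n set \<Rightarrow> 'n set) \<Rightarrow> 'n set set \<Rightarrow> 'n set set" where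
  "rep_plus G C1 = {vadd \<gamma> c | \<gamma> c. \<gamma> \<in> range G \<and> c \<in> C1}"

definition bin_entropy :: "real \<Rightarrow> real" where
  "bin_entropy p = - p * log 2 p - (1 - p) * log 2 (1 - p)"

definition gfun :: "real \<Rightarrow> nat \<Rightarrow> nat \<Rightarrow> real" where
  "gfun x n k = (if k \<le> n div 2
                 then min (2 powr (real n * bin_entropy (real k / real n)) * x) 1
                 else 1)"

end

theory Submission
  imports Defs
begin

text \<open>An error pattern e is decoded wrongly only if C2 contains a word x outside C1 with
  |e + x| \<le> |e| (the minimum-weight representative of e + C2 has the form e + x with x in C2,
  and x \<notin> C1, for otherwise e would lie in the coset of that representative modulo C1).
  A union bound over the Hamming ball of radius |e| around e, each point of which lies in C2
  with probability (2^(l+t) - 2^t)/(2^n - 2^t) \<le> 2^(l+t-n), and the volume bound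
  2^(n h(k/n)) for a ball of radius k \<le> n/2 give the estimate for each e; averaging over
  the noise gives the theorem.\<close>

lemma sum_binomial_le_entropy:
  fixes N k :: nat
  assumes "2 * k \<le> N"
  shows "(\<Sum>j\<le>k. real (N choose j)) \<le> 2 powr (real N * bin_entropy (real k / real N))"
proof (cases "k = 0")
  case True
  then show ?thesis by (simp add: bin_entropy_def)
next
  case False
  define p where "p = real k / real N"
  have N: "N > 0" using assms False by linarith
  have p0: "0 < p" using False N by (simp add: p_def)
  have p1: "p \<le> 1 - p" using assms N by (simp add: p_def field_simps)
  have p2: "0 < 1 - p" using p0 p1 by linarith
  have Np: "real N * p = k" using N by (simp add: p_def)
  have Nq: "real N * (1 - p) = real (N - k)"
    using N assms by (simp add: p_def field_simps of_nat_diff)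
  have entropy_eq: "2 powr (real N * bin_entropy p) = 1 / (p ^ k * (1 - p) ^ (N - k))"
  proof -
    have "real N * bin_entropy p
        = - ((real N * p) * log 2 p) - ((real N * (1 - p)) * log 2 (1 - p))"
      unfolding bin_entropy_def by (simp add: algebra_simps)
    then have "real N * bin_entropy p = - (real k * log 2 p) - (real (N - k) * log 2 (1 - p))"
      unfolding Np Nq .
    then have "2 powr (real N * bin_entropy p)
        = inverse (2 powr (log 2 p * real k)) * inverse (2 powr (log 2 (1 - p) * real (N - k)))"
      by (simp add: powr_diff powr_minus mult.commute divide_inverse)
    also have "\<dots> = inverse (p ^ k) * inverse ((1 - p) ^ (N - k))"
      using p0 p2 by (simp add: powr_powr[symmetric] powr_realpow)
    finally show ?thesis by (simp add: field_simps)
  qed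
  \<comment> \<open>Since p \<le> 1 - p, every term of the binomial expansion of (p + (1 - p))^N with
     j \<le> k dominates (N choose j) p^k (1 - p)^(N - k).\<close>
  have "(\<Sum>j\<le>k. real (N choose j)) * (p ^ k * (1 - p) ^ (N - k))
        \<le> (\<Sum>j\<le>k. real (N choose j) * p ^ j * (1 - p) ^ (N - j))"
    unfolding sum_distrib_right
  proof (rule sum_mono)
    fix j assume "j \<in> {..k}"
    then have jk: "j \<le> k" by simp
    have "p ^ k * (1 - p) ^ (N - k) = p ^ j * (p ^ (k - j) * (1 - p) ^ (N - k))"
      using jk by (simp add: power_add[symmetric])
    also have "\<dots> \<le> p ^ j * ((1 - p) ^ (k - j) * (1 - p) ^ (N - k))"
      using p0 p1 p2 by (intro mult_left_mono mult_right_mono power_mono) auto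
    also have "\<dots> = p ^ j * (1 - p) ^ (N - j)"
      using jk assms by (simp add: power_add[symmetric])
    finally show "real (N choose j) * (p ^ k * (1 - p) ^ (N - k))
        \<le> real (N choose j) * p ^ j * (1 - p) ^ (N - j)"
      by (simp add: mult.assoc mult_left_mono)
  qed
  also have "\<dots> \<le> (\<Sum>j\<le>N. real (N choose j) * p ^ j * (1 - p) ^ (N - j))"
    using assms p0 p2 by (intro sum_mono2) auto
  also have "\<dots> = (p + (1 - p)) ^ N" by (simp only: binomial_ring)
  finally have "(\<Sum>j\<le>k. real (N choose j)) * (p ^ k * (1 - p) ^ (N - k)) \<le> 1" by simp
  moreover have "0 < p ^ k * (1 - p) ^ (N - k)" using p0 p2 by simp
  ultimately show ?thesis unfolding p_def[symmetric] entropy_eq by (simp add: field_simps)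
qed

lemma vadd_vadd_cancel_left: "vadd e (vadd e x) = x"
  unfolding vadd_def by auto

lemma vadd_vadd_cancel_right: "vadd (vadd e c) c = e"
  unfolding vadd_def by auto

lemma vadd_empty_right: "vadd x {} = x"
  unfolding vadd_def by auto

lemma card_hamming_ball:
  fixes e :: "'n::finite set"
  shows "card {x. card (vadd e x) \<le> k} = (\<Sum>j\<le>k. CARD('n) choose j)"
proof -
  have "{x. card (vadd e x) \<le> k} = vadd e ` {y. card y \<le> k}"
    by (auto simp: vadd_vadd_cancel_left image_iff intro!: exI[of _ "vadd e _"])
  moreover have "inj (vadd e)" by (metis injI vadd_vadd_cancel_left)
  ultimately have "card {x. card (vadd e x) \<le> k} = card {y::'n set. card y \<le> k}"
    by (simp add: card_image inj_on_subset)
  also have "{y::'n set. card y \<le> k} = (\<Union>j\<in>{..k}. {y. card y = j})" by auto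
  also have "card \<dots> = (\<Sum>j\<le>k. card {y::'n set. card y = j})"
    by (rule card_UN_disjoint) auto
  also have "\<dots> = (\<Sum>j\<le>k. CARD('n) choose j)"
    using n_subsets[of "UNIV::'n set"] by simp
  finally show ?thesis .
qed

lemma decoding_error_witness:
  assumes "min_coset_rep C2 G" "lin_code C2" "e \<notin> rep_plus G C1"
  obtains x where "x \<in> C2" "x \<notin> C1" "card (vadd e x) \<le> card e"
proof -
  from assms(1) obtain c where c: "c \<in> C2" "G e = vadd e c"
    and minimal: "\<forall>c\<in>C2. hweight (G e) \<le> hweight (vadd e c)"
    unfolding min_coset_rep_def by blast
  have "{} \<in> C2" using assms(2) unfolding lin_code_def by blast
  with minimal have "card (G e) \<le> card e"
    by (metis hweight_def vadd_empty_right)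
  moreover have "c \<notin> C1"
  proof
    assume "c \<in> C1"
    then have "vadd (G e) c \<in> rep_plus G C1" unfolding rep_plus_def by blast
    with assms(3) c(2) show False by (simp add: vadd_vadd_cancel_right)
  qed
  ultimately show ?thesis using c that by auto
qed

lemma prob_decoding_error_le_ball:
  fixes Q :: "'n::finite set set pmf"
  assumes "\<forall>C\<in>set_pmf Q. lin_code C \<and> min_coset_rep C (G C)"
    and "\<forall>x. x \<notin> C1 \<longrightarrow> measure_pmf.prob Q {C. x \<in> C} \<le> \<alpha>"
    and "0 \<le> \<alpha>"
  shows "measure_pmf.prob Q {C. e \<notin> rep_plus (G C) C1}
           \<le> real (\<Sum>j\<le>card e. CARD('n) choose j) * \<alpha>"
proof -
  define B where "B = {x. x \<notin> C1 \<and> card (vadd e x) \<le> card e}"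
  have "{C. e \<notin> rep_plus (G C) C1} \<inter> set_pmf Q \<subseteq> (\<Union>x\<in>B. {C. x \<in> C})"
  proof
    fix C assume C: "C \<in> {C. e \<notin> rep_plus (G C) C1} \<inter> set_pmf Q"
    with assms(1) obtain x where "x \<in> C" "x \<notin> C1" "card (vadd e x) \<le> card e"
      by (auto elim: decoding_error_witness)
    then show "C \<in> (\<Union>x\<in>B. {C. x \<in> C})" unfolding B_def by auto
  qed
  then have "measure_pmf.prob Q {C. e \<notin> rep_plus (G C) C1}
      \<le> measure_pmf.prob Q (\<Union>x\<in>B. {C. x \<in> C})"
    by (metis measure_Int_set_pmf measure_pmf.finite_measure_mono sets_measure_pmf UNIV_I)
  also have "\<dots> \<le> (\<Sum>x\<in>B. measure_pmf.prob Q {C. x \<in> C})"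
    by (rule measure_pmf.finite_measure_subadditive_finite) auto
  also have "\<dots> \<le> real (card B) * \<alpha>"
    using sum_mono[of B _ "\<lambda>_. \<alpha>"] assms(2) unfolding B_def by auto
  also have "\<dots> \<le> real (\<Sum>j\<le>card e. CARD('n) choose j) * \<alpha>"
  proof -
    have "card B \<le> card {x. card (vadd e x) \<le> card e}"
      unfolding B_def by (intro card_mono) auto
    then show ?thesis
      unfolding card_hamming_ball using assms(3)
      by (intro mult_right_mono) (simp_all flip: of_nat_sum)
  qed
  finally show ?thesis .
qed

lemma prob_decoding_error_le_gfun:
  fixes Q :: "'n::finite set set pmf"
  assumes "\<forall>C\<in>set_pmf Q. lin_code C \<and> min_coset_rep C (G C)"
    and "\<forall>x. x \<notin> C1 \<longrightarrow> measure_pmf.prob Q {C. x \<in> C} \<le> \<alpha>"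
    and "0 \<le> \<alpha>" "\<alpha> \<le> a"
  shows "measure_pmf.prob Q {C. e \<notin> rep_plus (G C) C1} \<le> gfun a CARD('n) (card e)"
proof (cases "card e \<le> CARD('n) div 2")
  case True
  have "measure_pmf.prob Q {C. e \<notin> rep_plus (G C) C1}
      \<le> (\<Sum>j\<le>card e. real (CARD('n) choose j)) * \<alpha>"
    using prob_decoding_error_le_ball[OF assms(1-3)] by simp
  also have "\<dots> \<le> 2 powr (real CARD('n) * bin_entropy (real (card e) / real CARD('n))) * a"
    using True assms(3,4)
    by (intro mult_mono sum_binomial_le_entropy) (auto intro: sum_nonneg)
  finally show ?thesis using True unfolding gfun_def by simp
qed (simp add: gfun_def)

lemma coset_fraction_bounds:
  fixes N a b :: nat
  assumes "a \<le> N" "b \<le> a"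
  shows "0 \<le> ((2::real) ^ a - 2 ^ b) / (2 ^ N - 2 ^ b)"
    and "((2::real) ^ a - 2 ^ b) / (2 ^ N - 2 ^ b) \<le> 2 powr (real a - real N)"
proof -
  have ab: "(2::real) ^ b \<le> 2 ^ a" "(2::real) ^ a \<le> 2 ^ N"
    using assms by (simp_all add: power_increasing)
  then show "0 \<le> ((2::real) ^ a - 2 ^ b) / (2 ^ N - 2 ^ b)"
    by (intro divide_nonneg_nonneg) auto
  have powr_eq: "2 powr (real a - real N) = 2 ^ a / 2 ^ N"
    by (simp add: powr_diff powr_realpow)
  show "((2::real) ^ a - 2 ^ b) / (2 ^ N - 2 ^ b) \<le> 2 powr (real a - real N)"
  proof (cases "(2::real) ^ N = 2 ^ b")
    case True
    then show ?thesis unfolding powr_eq by simp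
  next
    case False
    then have "(2::real) ^ b < 2 ^ N" using ab by linarith
    moreover have "(2 ^ a - 2 ^ b) * 2 ^ N \<le> (2::real) ^ a * (2 ^ N - 2 ^ b)"
      using ab by (simp add: algebra_simps)
    ultimately show ?thesis unfolding powr_eq by (simp add: field_simps)
  qed
qed

lemma prob_pmf_eq_sum_indicator:
  fixes P :: "'a::finite pmf"
  shows "measure_pmf.prob P A = (\<Sum>x\<in>UNIV. pmf P x * indicator A x)"
  by (simp add: measure_measure_pmf_finite sum.inter_filter[symmetric] indicator_def
      if_distrib[of "\<lambda>c. _ * c"] cong: if_cong)

lemma expectation_prob_pmf_swap:
  fixes Q :: "'b::finite pmf" and P :: "'a::finite pmf"
  shows "measure_pmf.expectation Q (\<lambda>c. measure_pmf.prob P (A c))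
           = (\<Sum>x\<in>UNIV. pmf P x * measure_pmf.prob Q {c. x \<in> A c})"
proof -
  have "measure_pmf.expectation Q (\<lambda>c. measure_pmf.prob P (A c))
      = (\<Sum>c\<in>UNIV. pmf Q c * measure_pmf.prob P (A c))"
    by (subst integral_measure_pmf[of UNIV]) (auto simp: mult.commute)
  also have "\<dots> = (\<Sum>c\<in>UNIV. \<Sum>x\<in>UNIV. pmf P x * (pmf Q c * indicator (A c) x))"
    unfolding prob_pmf_eq_sum_indicator[of P] sum_distrib_left by (simp add: algebra_simps)
  also have "\<dots> = (\<Sum>x\<in>UNIV. \<Sum>c\<in>UNIV. pmf P x * (pmf Q c * indicator (A c) x))"
    by (rule sum.swap)
  also have "\<dots> = (\<Sum>x\<in>UNIV. pmf P x * measure_pmf.prob Q {c. x \<in> A c})"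
    unfolding prob_pmf_eq_sum_indicator[of Q] sum_distrib_left
    by (simp add: indicator_def)
  finally show ?thesis .
qed

lemma sum_pmf_group_by_card:
  fixes P :: "'n::finite set pmf"
  shows "(\<Sum>e\<in>UNIV. pmf P e * f (card e))
           = (\<Sum>k\<le>CARD('n). measure_pmf.prob P {e. card e = k} * f k)"
proof -
  have "card ` (UNIV::'n set set) \<subseteq> {..CARD('n)}"
    by (auto intro: card_mono)
  then have "(\<Sum>e\<in>UNIV. pmf P e * f (card e))
      = (\<Sum>k\<le>CARD('n). \<Sum>e\<in>{e\<in>UNIV. card e = k}. pmf P e * f (card e))"
    by (intro sum.group[symmetric]) auto
  also have "\<dots> = (\<Sum>k\<le>CARD('n). measure_pmf.prob P {e. card e = k} * f k)"
    by (simp add: measure_measure_pmf_finite sum_distrib_right)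
  finally show ?thesis .
qed

theorem lemma1:
  fixes C1 :: "'n::finite set set"
    and Q :: "'n set set pmf"
    and G :: "'n set set \<Rightarrow> 'n set \<Rightarrow> 'n set"
    and PW :: "'n set pmf"
    and t l :: nat
  assumes "t + l \<le> CARD('n)"
    and "lin_code_dim C1 t"
    and "\<forall>C2\<in>set_pmf Q. lin_code_dim C2 (t + l) \<and> C1 \<subseteq> C2"
    and "\<forall>x. x \<notin> C1 \<longrightarrow>
           measure_pmf.prob Q {C2. x \<in> C2} =
             (2 ^ (l + t) - 2 ^ t) / (2 ^ CARD('n) - 2 ^ t)"
    and "\<forall>C2\<in>set_pmf Q. min_coset_rep C2 (G C2)"
  shows "measure_pmf.expectation Q
           (\<lambda>C2. 1 - measure_pmf.prob PW (rep_plus (G C2) C1))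
         \<le> (\<Sum>k\<le>CARD('n). measure_pmf.prob PW {e. hweight e = k}
                            * gfun (2 powr (real (l + t) - real CARD('n))) CARD('n) k)"
proof -
  define a where "a = 2 powr (real (l + t) - real CARD('n))"
  have codes: "\<forall>C\<in>set_pmf Q. lin_code C \<and> min_coset_rep C (G C)"
    using assms(3,5) unfolding lin_code_dim_def by blast
  have error_le: "measure_pmf.prob Q {C. e \<notin> rep_plus (G C) C1} \<le> gfun a CARD('n) (card e)"
    for e
    using assms(1,4) coset_fraction_bounds[of "l + t" "CARD('n)" t] unfolding a_def
    by (intro prob_decoding_error_le_gfun[OF codes]) auto
  have "measure_pmf.expectation Q (\<lambda>C. 1 - measure_pmf.prob PW (rep_plus (G C) C1))
      = measure_pmf.expectation Q (\<lambda>C. measure_pmf.prob PW (UNIV - rep_plus (G C) C1))"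
  proof -
    have "1 - measure_pmf.prob PW A = measure_pmf.prob PW (UNIV - A)" for A
      using measure_pmf.prob_compl[of A PW] by simp
    then show ?thesis by simp
  qed
  also have "\<dots> = (\<Sum>e\<in>UNIV. pmf PW e * measure_pmf.prob Q {C. e \<notin> rep_plus (G C) C1})"
    by (simp add: expectation_prob_pmf_swap)
  also have "\<dots> \<le> (\<Sum>e\<in>UNIV. pmf PW e * gfun a CARD('n) (card e))"
    using error_le by (intro sum_mono mult_left_mono) auto
  also have "\<dots> = (\<Sum>k\<le>CARD('n). measure_pmf.prob PW {e. hweight e = k} * gfun a CARD('n) k)"
    unfolding sum_pmf_group_by_card hweight_def ..
  finally show ?thesis unfolding a_def .
qed

end
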